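(* Let $Q=\prod_{n\in\mathbb{Z}}[0,1]$ with the metric $D(\hat t,\hat s)=\sum_{n\in\mathbb{Z}}|t_n-s_n|/2^{|n|}$ and let $\sigma:Q\to Q$ be the shift map. Let $a=(\dots,0,0,0,\dots)$ and, for $n\in\mathbb{Z}$ and $p\in\{1,2,\dots\}$, let $b^p_n\in Q$ be the sequence whose $n$-th coordinate is $1/p$ and all other coordinates are $0$. Let $S_Q=\{a\}\cup\{b^p_n: n\in\mathbb{Z},\ p\ge 1\}$ (a closed $\sigma$-invariant subset) and $\sigma_{S_Q}=\sigma|_{S_Q}$. Then $h(\sigma_{S_Q})=0$ but $h(2^{\sigma_{S_Q}})=\infty$.
   Context: $2^{S_Q}$ is the hyperspace of nonempty closed subsets of $S_Q$ with the Hausdorff metric and $2^{\sigma_{S_Q}}(A)=\sigma(A)$. $h$ denotes topological entropy. *)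

theory Defs
  imports "HOL-Analysis.Analysis"
begin

definition bowen_dist :: "('a \<Rightarrow> 'a \<Rightarrow> real) \<Rightarrow> ('a \<Rightarrow> 'a) \<Rightarrow> nat \<Rightarrow> 'a \<Rightarrow> 'a \<Rightarrow> real" where
  "bowen_dist d f n x y = Max ((\<lambda>k. d ((f ^^ k) x) ((f ^^ k) y)) ` {..<n})"

definition separated_set ::
  "'a set \<Rightarrow> ('a \<Rightarrow> 'a \<Rightarrow> real) \<Rightarrow> ('a \<Rightarrow> 'a) \<Rightarrow> nat \<Rightarrow> real \<Rightarrow> 'a set \<Rightarrow> bool" where
  "separated_set X d f n \<epsilon> E \<longleftrightarrow> E \<subseteq> X \<and>
     (\<forall>x\<in>E. \<forall>y\<in>E. x \<noteq> y \<longrightarrow> bowen_dist d f n x y > \<epsilon>)"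

definition sep_growth ::
  "'a set \<Rightarrow> ('a \<Rightarrow> 'a \<Rightarrow> real) \<Rightarrow> ('a \<Rightarrow> 'a) \<Rightarrow> real \<Rightarrow> nat \<Rightarrow> ereal" where
  "sep_growth X d f \<epsilon> n =
     (SUP E\<in>{E. finite E \<and> separated_set X d f n \<epsilon> E}. ereal (ln (real (card E)) / real n))"

text \<open>Bowen's topological entropy h(f) = lim_{\<epsilon>\<rightarrow>0} limsup_n (1/n) log s(n,\<epsilon>);
  the limit is monotone in \<epsilon>, hence equals the supremum over \<epsilon> > 0.\<close>
definition top_entropy :: "'a set \<Rightarrow> ('a \<Rightarrow> 'a \<Rightarrow> real) \<Rightarrow> ('a \<Rightarrow> 'a) \<Rightarrow> ereal" where
  "top_entropy X d f =
     (SUP \<epsilon>\<in>{0<..}. limsup (\<lambda>n. sep_growth X d f \<epsilon> (Suc n)))"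

definition metric_closed_in :: "('a \<Rightarrow> 'a \<Rightarrow> real) \<Rightarrow> 'a set \<Rightarrow> 'a set \<Rightarrow> bool" where
  "metric_closed_in d X A \<longleftrightarrow> A \<subseteq> X \<and>
     (\<forall>x\<in>X. (\<forall>e>0. \<exists>y\<in>A. d x y < e) \<longrightarrow> x \<in> A)"

definition hyperspace :: "('a \<Rightarrow> 'a \<Rightarrow> real) \<Rightarrow> 'a set \<Rightarrow> 'a set set" where
  "hyperspace d X = {A. A \<noteq> {} \<and> metric_closed_in d X A}"

definition hausdorff_metric :: "('a \<Rightarrow> 'a \<Rightarrow> real) \<Rightarrow> 'a set \<Rightarrow> 'a set \<Rightarrow> real" where
  "hausdorff_metric d A B =
     max (SUP a\<in>A. INF b\<in>B. d a b) (SUP b\<in>B. INF a\<in>A. d a b)"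

definition Q :: "(int \<Rightarrow> real) set" where
  "Q = {t. \<forall>n. 0 \<le> t n \<and> t n \<le> 1}"

definition QD :: "(int \<Rightarrow> real) \<Rightarrow> (int \<Rightarrow> real) \<Rightarrow> real" where
  "QD t s = (\<Sum>\<^sub>\<infinity>n::int. \<bar>t n - s n\<bar> / 2 ^ nat \<bar>n\<bar>)"

definition shift :: "(int \<Rightarrow> real) \<Rightarrow> (int \<Rightarrow> real)" where
  "shift t = (\<lambda>n. t (n + 1))"

definition pt_a :: "int \<Rightarrow> real" where
  "pt_a = (\<lambda>_. 0)"

definition pt_b :: "nat \<Rightarrow> int \<Rightarrow> (int \<Rightarrow> real)" where
  "pt_b p n = (\<lambda>m. if m = n then 1 / real p else 0)"

definition S_Q :: "(int \<Rightarrow> real) set" where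
  "S_Q = {pt_a} \<union> {pt_b p n | p n. p \<ge> 1}"

end

theory Submission
  imports Defs "HOL-Real_Asymp.Real_Asymp"
begin

text \<open>
Every point of S_Q is some b^p_k (with b^0_k = a), and the shift sends b^p_k to b^p_{k-1}.
In an (n,\<epsilon>)-separated set at most one point stays \<epsilon>/2-close to a during n steps,
by the triangle inequality through a. Any other point b^p_k is farther than \<epsilon>/2 from a at
some time j < n, which forces p < 2/\<epsilon> and |k - j| < 2/\<epsilon>. So separated sets grow
only linearly in n and the entropy vanishes.

In the hyperspace, a word w in {1..m}^n gives the finite set {b^(w j)_j : j < n}. If two words
differ at position i, then after i shifts the point b^(w i)_0 of the first set is at distance at
least 1/m^2 from every point of the second. These m^n closed sets are therefore
(n, 1/(2 m^2))-separated, and the entropy of the induced map is at least log m for every m.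
\<close>

section \<open>Separated sets and topological entropy\<close>

lemma funpow_image:
  fixes f :: "'a \<Rightarrow> 'a"
  shows "((\<lambda>A. f ` A) ^^ n) A = (f ^^ n) ` A"
  by (induction n) (simp_all add: image_comp)

lemma bowen_dist_ge: "k < n \<Longrightarrow> d ((f ^^ k) x) ((f ^^ k) y) \<le> bowen_dist d f n x y"
  unfolding bowen_dist_def by (intro Max_ge) auto

lemma bowen_dist_le:
  "0 < n \<Longrightarrow> (\<And>k. k < n \<Longrightarrow> d ((f ^^ k) x) ((f ^^ k) y) \<le> c) \<Longrightarrow> bowen_dist d f n x y \<le> c"
  unfolding bowen_dist_def by (subst Max_le_iff) auto

lemma sep_growth_ge:
  "finite E \<Longrightarrow> separated_set X d f n \<epsilon> E \<Longrightarrow>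
     ereal (ln (real (card E)) / real n) \<le> sep_growth X d f \<epsilon> n"
  unfolding sep_growth_def by (intro SUP_upper) simp

text \<open>Witnessed by the empty set, using the junk value \<^term>\<open>ln 0 = (0::real)\<close>.\<close>
lemma sep_growth_nonneg: "0 \<le> sep_growth X d f \<epsilon> n"
  using sep_growth_ge[of "{}" X d f n \<epsilon>] by (simp add: separated_set_def zero_ereal_def)

lemma sep_growth_le:
  "(\<And>E. finite E \<Longrightarrow> separated_set X d f n \<epsilon> E \<Longrightarrow> ln (real (card E)) / real n \<le> c) \<Longrightarrow>
     sep_growth X d f \<epsilon> n \<le> ereal c"
  unfolding sep_growth_def by (intro SUP_least) auto

lemma sep_growth_le_if_card_le:
  assumes "0 < n" "1 \<le> K"
    and "\<And>E. finite E \<Longrightarrow> separated_set X d f n \<epsilon> E \<Longrightarrow> real (card E) \<le> K * real n"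
  shows "sep_growth X d f \<epsilon> n \<le> ereal (ln (K * real n) / real n)"
proof (rule sep_growth_le)
  fix E assume E: "finite E" "separated_set X d f n \<epsilon> E"
  have "1 * 1 \<le> K * real n"
    using assms(1,2) by (intro mult_mono) auto
  then have "ln (real (card E)) \<le> ln (K * real n)"
    using assms(3)[OF E] by (cases "card E = 0") auto
  then show "ln (real (card E)) / real n \<le> ln (K * real n) / real n"
    by (simp add: divide_right_mono)
qed

lemma top_entropy_eq_0_if_linear_growth:
  assumes "\<And>\<epsilon>. \<epsilon> > 0 \<Longrightarrow> \<exists>K. \<forall>n E. finite E \<longrightarrow> separated_set X d f (Suc n) \<epsilon> E \<longrightarrow>
             real (card E) \<le> K * real (Suc n)"
  shows "top_entropy X d f = 0"
proof -
  have "limsup (\<lambda>n. sep_growth X d f \<epsilon> (Suc n)) = 0" if "\<epsilon> > 0" for \<epsilon>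
  proof (rule antisym)
    obtain K0 where K0: "\<And>n E. finite E \<Longrightarrow> separated_set X d f (Suc n) \<epsilon> E \<Longrightarrow>
        real (card E) \<le> K0 * real (Suc n)"
      using assms[OF \<open>\<epsilon> > 0\<close>] by blast
    define K where "K = max 1 K0"
    have "K \<ge> 1" by (simp add: K_def)
    have "sep_growth X d f \<epsilon> (Suc n) \<le> ereal (ln (K * real (Suc n)) / real (Suc n))" for n
    proof (rule sep_growth_le_if_card_le[OF _ \<open>K \<ge> 1\<close>])
      fix E assume "finite E" "separated_set X d f (Suc n) \<epsilon> E"
      then have "real (card E) \<le> K0 * real (Suc n)"
        by (rule K0)
      moreover have "K0 * real (Suc n) \<le> K * real (Suc n)"
        by (intro mult_right_mono) (simp_all add: K_def)
      ultimately show "real (card E) \<le> K * real (Suc n)"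
        by linarith
    qed simp
    then have "limsup (\<lambda>n. sep_growth X d f \<epsilon> (Suc n))
          \<le> limsup (\<lambda>n. ereal (ln (K * real (Suc n)) / real (Suc n)))"
      by (intro Limsup_mono always_eventually) simp
    also have "\<dots> = 0"
    proof (intro lim_imp_Limsup)
      have "(\<lambda>n. ln (K * real (Suc n)) / real (Suc n)) \<longlonglongrightarrow> 0"
        using \<open>K \<ge> 1\<close> by real_asymp
      then show "(\<lambda>n. ereal (ln (K * real (Suc n)) / real (Suc n))) \<longlonglongrightarrow> 0"
        by (simp add: zero_ereal_def tendsto_ereal)
    qed simp
    finally show "limsup (\<lambda>n. sep_growth X d f \<epsilon> (Suc n)) \<le> 0" .
  qed (intro le_Limsup always_eventually allI sep_growth_nonneg; simp)
  then have "top_entropy X d f = (SUP \<epsilon>\<in>{(0::real)<..}. 0)"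
    unfolding top_entropy_def by (intro SUP_cong) simp_all
  then show ?thesis
    by simp
qed

lemma top_entropy_eq_infinity_if_exponential_growth:
  assumes "\<And>m. m \<ge> 1 \<Longrightarrow> \<exists>\<epsilon>>0. \<forall>n. \<exists>E. finite E \<and> separated_set X d f (Suc n) \<epsilon> E \<and>
             card E = m ^ Suc n"
  shows "top_entropy X d f = \<infinity>"
proof (rule ereal_top)
  fix B :: real
  define m where "m = nat \<lceil>exp B\<rceil> + 1"
  have "m \<ge> 1" by (simp add: m_def)
  have "exp B \<le> real m"
    unfolding m_def by linarith
  then have "B \<le> ln (real m)"
    using \<open>m \<ge> 1\<close> by (simp add: ln_ge_iff)
  obtain \<epsilon> where "\<epsilon> > 0" and sep: "\<And>n. \<exists>E. finite E \<and> separated_set X d f (Suc n) \<epsilon> E \<and> card E = m ^ Suc n"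
    using assms[OF \<open>m \<ge> 1\<close>] by blast
  have "ereal (ln (real m)) \<le> sep_growth X d f \<epsilon> (Suc n)" for n
  proof -
    obtain E where "finite E" "separated_set X d f (Suc n) \<epsilon> E" "card E = m ^ Suc n"
      using sep by blast
    moreover have "ln (real (m ^ Suc n)) = real (Suc n) * ln (real m)"
      unfolding of_nat_power by (rule ln_realpow)
    then have "ln (real (m ^ Suc n)) / real (Suc n) = ln (real m)"
      by simp
    ultimately show ?thesis
      using sep_growth_ge by metis
  qed
  then have "ereal (ln (real m)) \<le> limsup (\<lambda>n. sep_growth X d f \<epsilon> (Suc n))"
    by (intro le_Limsup always_eventually) simp_all
  also have "\<dots> \<le> top_entropy X d f"
    unfolding top_entropy_def using \<open>\<epsilon> > 0\<close> by (intro SUP_upper) simp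
  finally show "ereal B \<le> top_entropy X d f"
    using \<open>B \<le> ln (real m)\<close> by (meson ereal_less_eq(3) order_trans)
qed

lemma bowen_dist_hausdorff_ge:
  "k < n \<Longrightarrow> hausdorff_metric d ((f ^^ k) ` A) ((f ^^ k) ` B)
     \<le> bowen_dist (hausdorff_metric d) (\<lambda>A. f ` A) n A B"
  using bowen_dist_ge[of k n "hausdorff_metric d" "\<lambda>A. f ` A" A B] by (simp add: funpow_image)

lemma hausdorff_metric_ge:
  assumes "finite A" "x \<in> A" "B \<noteq> {}" "\<And>y. y \<in> B \<Longrightarrow> c \<le> d x y"
  shows "c \<le> hausdorff_metric d A B"
proof -
  have "c \<le> (INF y\<in>B. d x y)"
    using assms by (intro cINF_greatest) auto
  also have "\<dots> \<le> (SUP a\<in>A. INF y\<in>B. d a y)"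
    using assms by (intro cSUP_upper) auto
  finally show ?thesis
    unfolding hausdorff_metric_def by simp
qed

lemma finite_in_hyperspace:
  assumes "finite A" "A \<noteq> {}" "A \<subseteq> X"
    and pos: "\<And>x y. x \<in> X \<Longrightarrow> y \<in> A \<Longrightarrow> x \<noteq> y \<Longrightarrow> 0 < d x y"
  shows "A \<in> hyperspace d X"
  unfolding hyperspace_def metric_closed_in_def
proof (intro CollectI conjI assms ballI impI)
  fix x assume "x \<in> X" and approx: "\<forall>e>0. \<exists>y\<in>A. d x y < e"
  show "x \<in> A"
  proof (rule ccontr)
    assume "x \<notin> A"
    then have "0 < Min (d x ` A)"
      using pos \<open>x \<in> X\<close> assms(1,2) by (auto simp: Min_gr_iff)
    then obtain y where "y \<in> A" "d x y < Min (d x ` A)"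
      using approx by blast
    moreover have "Min (d x ` A) \<le> d x y"
      using assms(1) \<open>y \<in> A\<close> by simp
    ultimately show False
      by simp
  qed
qed

lemma abs_inverse_diff_ge:
  assumes "p \<in> {1..m}" "q \<in> {1..m}" "p \<noteq> q"
  shows "1 / (real m)\<^sup>2 \<le> \<bar>1 / real p - 1 / real q\<bar>"
proof -
  have "1 / (real m)\<^sup>2 \<le> 1 / (real p * real q)"
    using assms by (intro divide_left_mono) (auto simp: power2_eq_square intro!: mult_mono)
  also have "\<dots> \<le> \<bar>real q - real p\<bar> / (real p * real q)"
    using assms by (intro divide_right_mono) auto
  also have "\<dots> = \<bar>1 / real p - 1 / real q\<bar>"
    using assms by (simp add: field_simps)
  finally show ?thesis .
qed

section \<open>The shift on S_Q\<close>

text \<open>Since \<^term>\<open>1 / 0 = (0::real)\<close>, the point a is \<^term>\<open>pt_b 0 k\<close>, so S_Q is parametrised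
  by all pairs (p, k).\<close>
lemma pt_a_eq_pt_b: "pt_a = pt_b 0 k"
  by (simp add: pt_a_def pt_b_def fun_eq_iff)

lemma S_Q_eq: "S_Q = {pt_b p k | p k. True}"
proof (intro set_eqI iffI)
  fix x assume "x \<in> S_Q"
  then show "x \<in> {pt_b p k | p k. True}"
    unfolding S_Q_def using pt_a_eq_pt_b by blast
next
  fix x assume "x \<in> {pt_b p k | p k. True}"
  then obtain p k where "x = pt_b p k"
    by blast
  then show "x \<in> S_Q"
    unfolding S_Q_def using pt_a_eq_pt_b[of k] by (cases "p = 0") auto
qed

lemma funpow_shift_pt_b: "(shift ^^ j) (pt_b p k) = pt_b p (k - int j)"
  by (induction j) (auto simp: shift_def pt_b_def fun_eq_iff)

lemma funpow_shift_S_Q: "x \<in> S_Q \<Longrightarrow> (shift ^^ j) x \<in> S_Q"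
  unfolding S_Q_eq by (clarsimp simp: funpow_shift_pt_b) blast

lemma QD_pt_b:
  "QD (pt_b p k) (pt_b q l) =
     (if k = l then \<bar>1 / real p - 1 / real q\<bar> / 2 ^ nat \<bar>k\<bar>
      else 1 / real p / 2 ^ nat \<bar>k\<bar> + 1 / real q / 2 ^ nat \<bar>l\<bar>)"
proof -
  let ?g = "\<lambda>n. \<bar>pt_b p k n - pt_b q l n\<bar> / 2 ^ nat \<bar>n\<bar> :: real"
  have "QD (pt_b p k) (pt_b q l) = infsum ?g {k, l}"
    unfolding QD_def by (rule infsum_cong_neutral) (auto simp: pt_b_def)
  then show ?thesis
    by (cases "k = l") (auto simp: pt_b_def)
qed

lemma QD_pt_b_pt_a: "QD (pt_b p k) pt_a = 1 / real p / 2 ^ nat \<bar>k\<bar>"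
  by (cases "k = 0") (simp_all add: pt_a_eq_pt_b[of 0] QD_pt_b)

lemma QD_S_Q_le_via_pt_a:
  assumes "x \<in> S_Q" "y \<in> S_Q"
  shows "QD x y \<le> QD x pt_a + QD y pt_a"
proof -
  obtain p k q l where x: "x = pt_b p k" and y: "y = pt_b q l"
    using assms unfolding S_Q_eq by blast
  show ?thesis
  proof (cases "k = l")
    case True
    have "\<bar>1 / real p - 1 / real q\<bar> / 2 ^ nat \<bar>k\<bar> \<le> (1 / real p + 1 / real q) / 2 ^ nat \<bar>k\<bar>"
      using abs_triangle_ineq4[of "1 / real p" "1 / real q"] by (intro divide_right_mono) simp_all
    then show ?thesis
      unfolding x y using True by (simp add: QD_pt_b QD_pt_b_pt_a add_divide_distrib)
  qed (simp add: x y QD_pt_b QD_pt_b_pt_a)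
qed

lemma QD_S_Q_pos:
  assumes "x \<in> S_Q" "y \<in> S_Q" "x \<noteq> y"
  shows "0 < QD x y"
proof -
  obtain p k q l where x: "x = pt_b p k" and y: "y = pt_b q l"
    using assms unfolding S_Q_eq by blast
  show ?thesis
  proof (cases "k = l")
    case True
    then have "1 / real p \<noteq> 1 / real q"
      using assms(3) unfolding x y by (auto simp: pt_b_def)
    then show ?thesis
      unfolding x y using True by (simp add: QD_pt_b)
  next
    case False
    have "p \<noteq> 0 \<or> q \<noteq> 0"
      using assms(3) pt_a_eq_pt_b unfolding x y by metis
    then show ?thesis
      unfolding x y using False by (auto simp: QD_pt_b add_pos_nonneg add_nonneg_pos)
  qed
qed

lemma orbits_near_pt_a_bowen_dist_le:
  assumes "x \<in> S_Q" "y \<in> S_Q" "0 < n"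
    and "\<And>j. j < n \<Longrightarrow> QD ((shift ^^ j) x) pt_a \<le> \<epsilon> / 2"
    and "\<And>j. j < n \<Longrightarrow> QD ((shift ^^ j) y) pt_a \<le> \<epsilon> / 2"
  shows "bowen_dist QD shift n x y \<le> \<epsilon>"
proof (rule bowen_dist_le[OF \<open>0 < n\<close>])
  fix j assume "j < n"
  have "QD ((shift ^^ j) x) ((shift ^^ j) y) \<le> QD ((shift ^^ j) x) pt_a + QD ((shift ^^ j) y) pt_a"
    using assms(1,2) by (intro QD_S_Q_le_via_pt_a funpow_shift_S_Q)
  also have "\<dots> \<le> \<epsilon>"
    using assms(4,5)[OF \<open>j < n\<close>] by linarith
  finally show "QD ((shift ^^ j) x) ((shift ^^ j) y) \<le> \<epsilon>" .
qed

lemma pt_b_far_from_pt_a_bounds: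
  assumes "\<epsilon> > 0" "\<epsilon> / 2 < QD (pt_b p k) pt_a"
  shows "1 \<le> p" "real p < 2 / \<epsilon>" "real (nat \<bar>k\<bar>) < 2 / \<epsilon>"
proof -
  define a where "a = nat \<bar>k\<bar>"
  from assms(2) have close: "\<epsilon> / 2 < 1 / real p / 2 ^ a"
    by (simp add: QD_pt_b_pt_a a_def)
  then show "1 \<le> p"
    using assms(1) by (cases p) auto
  then have "real p * 2 ^ a < 2 / \<epsilon>"
    using close assms(1) by (simp add: field_simps)
  moreover have "real p \<le> real p * 2 ^ a"
    by (simp add: mult_le_cancel_left1)
  moreover have "(2::real) ^ a \<le> real p * 2 ^ a"
    using \<open>1 \<le> p\<close> by (simp add: mult_le_cancel_right1)
  moreover have "real a < 2 ^ a"
    using less_exp[of a] by (metis of_nat_less_iff of_nat_numeral of_nat_power)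
  ultimately show "real p < 2 / \<epsilon>" "real (nat \<bar>k\<bar>) < 2 / \<epsilon>"
    unfolding a_def by linarith+
qed

lemma card_separated_orbits_near_pt_a_le_1:
  assumes "0 < n" "finite E" and sep: "separated_set S_Q QD shift n \<epsilon> E"
  shows "card {x \<in> E. \<forall>j<n. QD ((shift ^^ j) x) pt_a \<le> \<epsilon> / 2} \<le> 1"
proof -
  have "E \<subseteq> S_Q"
    using sep unfolding separated_set_def by blast
  have "x = y" if "x \<in> E" "y \<in> E"
    and "\<forall>j<n. QD ((shift ^^ j) x) pt_a \<le> \<epsilon> / 2" "\<forall>j<n. QD ((shift ^^ j) y) pt_a \<le> \<epsilon> / 2" for x y
  proof (rule ccontr)
    assume "x \<noteq> y"
    then have "\<epsilon> < bowen_dist QD shift n x y"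
      using sep that(1,2) unfolding separated_set_def by blast
    moreover have "bowen_dist QD shift n x y \<le> \<epsilon>"
      using that \<open>E \<subseteq> S_Q\<close> \<open>0 < n\<close> by (intro orbits_near_pt_a_bowen_dist_le) auto
    ultimately show False
      by simp
  qed
  moreover have "finite {x \<in> E. \<forall>j<n. QD ((shift ^^ j) x) pt_a \<le> \<epsilon> / 2}"
    using \<open>finite E\<close> by simp
  ultimately show ?thesis
    unfolding One_nat_def by (subst card_le_Suc0_iff_eq) blast+
qed

lemma orbit_far_from_pt_a_in_grid:
  fixes R :: nat
  assumes "\<epsilon> > 0" "2 / \<epsilon> \<le> real R" "x \<in> S_Q" "j < n"
    and far: "\<epsilon> / 2 < QD ((shift ^^ j) x) pt_a"
  shows "x \<in> (\<lambda>(p, k). pt_b p k) ` ({1..R} \<times> {- int R..int n + int R})"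
proof -
  obtain p k where x: "x = pt_b p k"
    using \<open>x \<in> S_Q\<close> unfolding S_Q_eq by blast
  have "1 \<le> p" "p < R" "nat \<bar>k - int j\<bar> < R"
    using pt_b_far_from_pt_a_bounds[OF \<open>\<epsilon> > 0\<close>, of p "k - int j"] far assms(2)
    unfolding x funpow_shift_pt_b by simp_all
  then have "(p, k) \<in> {1..R} \<times> {- int R..int n + int R}"
    using \<open>j < n\<close> by auto
  then show ?thesis
    unfolding x by (rule rev_image_eqI) simp
qed

lemma card_separated_S_Q_le:
  fixes R :: nat
  assumes "\<epsilon> > 0" "2 / \<epsilon> \<le> real R" "0 < n"
    and "finite E" and sep: "separated_set S_Q QD shift n \<epsilon> E"
  shows "card E \<le> 1 + R * (n + 2 * R + 1)"
proof -
  define F where "F = {x \<in> E. \<forall>j<n. QD ((shift ^^ j) x) pt_a \<le> \<epsilon> / 2}"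
  have "finite F" "F \<subseteq> E" "card F \<le> 1"
    using \<open>finite E\<close> card_separated_orbits_near_pt_a_le_1[OF \<open>0 < n\<close> \<open>finite E\<close> sep]
    unfolding F_def by auto
  have "E - F \<subseteq> (\<lambda>(p, k). pt_b p k) ` ({1..R} \<times> {- int R..int n + int R})"
  proof
    fix x assume "x \<in> E - F"
    then obtain j where "j < n" "\<epsilon> / 2 < QD ((shift ^^ j) x) pt_a"
      unfolding F_def by (auto simp: not_le)
    moreover have "x \<in> S_Q"
      using sep \<open>x \<in> E - F\<close> unfolding separated_set_def by blast
    ultimately show "x \<in> (\<lambda>(p, k). pt_b p k) ` ({1..R} \<times> {- int R..int n + int R})"
      by (intro orbit_far_from_pt_a_in_grid[OF \<open>\<epsilon> > 0\<close> assms(2)])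
  qed
  then have "card (E - F) \<le> card ((\<lambda>(p, k). pt_b p k) ` ({1..R} \<times> {- int R..int n + int R}))"
    by (intro card_mono) auto
  also have "\<dots> \<le> card ({1..R} \<times> {- int R..int n + int R})"
    by (rule card_image_le) simp
  also have "\<dots> = R * (n + 2 * R + 1)"
    by (simp add: card_cartesian_product nat_add_distrib nat_mult_distrib)
  finally have "card (E - F) \<le> R * (n + 2 * R + 1)" .
  moreover have "card (E - F) = card E - card F" "card F \<le> card E"
    using \<open>finite E\<close> \<open>F \<subseteq> E\<close> by (simp_all add: card_Diff_subset card_mono finite_subset)
  ultimately show ?thesis
    using \<open>card F \<le> 1\<close> by linarith
qed

lemma top_entropy_S_Q: "top_entropy S_Q QD shift = 0"
proof (rule top_entropy_eq_0_if_linear_growth)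
  fix \<epsilon> :: real assume "\<epsilon> > 0"
  define R where "R = nat \<lceil>2 / \<epsilon>\<rceil>"
  have "2 / \<epsilon> \<le> real R"
    unfolding R_def by linarith
  have "real (card E) \<le> real (1 + R * (2 * R + 2)) * real (Suc n)"
    if "finite E" "separated_set S_Q QD shift (Suc n) \<epsilon> E" for n E
  proof -
    have "card E \<le> 1 + R * (Suc n + 2 * R + 1)"
      using card_separated_S_Q_le[OF \<open>\<epsilon> > 0\<close> \<open>2 / \<epsilon> \<le> real R\<close> _ that] by simp
    also have "\<dots> \<le> (1 + R * (2 * R + 2)) * Suc n"
    proof -
      have "R * n \<le> R * (2 * R + 2) * n"
        by simp
      then show ?thesis
        by (simp add: algebra_simps)
    qed
    finally show ?thesis
      by (metis of_nat_le_iff of_nat_mult)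
  qed
  then show "\<exists>K. \<forall>n E. finite E \<longrightarrow> separated_set S_Q QD shift (Suc n) \<epsilon> E \<longrightarrow>
               real (card E) \<le> K * real (Suc n)"
    by blast
qed

section \<open>The induced map on the hyperspace\<close>

definition word_set :: "(nat \<Rightarrow> nat) \<Rightarrow> nat \<Rightarrow> (int \<Rightarrow> real) set" where
  "word_set w n = (\<lambda>j. pt_b (w j) (int j)) ` {..<n}"

lemma word_set_in_hyperspace: "0 < n \<Longrightarrow> word_set w n \<in> hyperspace QD S_Q"
proof (rule finite_in_hyperspace)
  show "word_set w n \<subseteq> S_Q"
    unfolding word_set_def S_Q_eq by blast
  then show "\<And>x y. x \<in> S_Q \<Longrightarrow> y \<in> word_set w n \<Longrightarrow> x \<noteq> y \<Longrightarrow> 0 < QD x y"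
    using QD_S_Q_pos by blast
qed (auto simp: word_set_def)

lemma pt_b_in_funpow_shift_word_set: "i < n \<Longrightarrow> pt_b (w i) 0 \<in> (shift ^^ i) ` word_set w n"
  unfolding word_set_def by (rule image_eqI[of _ _ "pt_b (w i) (int i)"]) (auto simp: funpow_shift_pt_b)

lemma QD_funpow_shift_word_set_ge:
  assumes "w i \<in> {1..m}" "v i \<in> {1..m}" "w i \<noteq> v i" and "y \<in> (shift ^^ i) ` word_set v n"
  shows "1 / (real m)\<^sup>2 \<le> QD (pt_b (w i) 0) y"
proof -
  obtain j where y: "y = pt_b (v j) (int j - int i)"
    using assms(4) unfolding word_set_def by (auto simp: funpow_shift_pt_b)
  show ?thesis
  proof (cases "j = i")
    case True
    then show ?thesis
      using abs_inverse_diff_ge[OF assms(1-3)] by (simp add: y QD_pt_b)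
  next
    case False
    have "real m \<le> (real m)\<^sup>2"
      using assms(1) by (simp add: power2_eq_square mult_le_cancel_left1)
    then have "1 / (real m)\<^sup>2 \<le> 1 / real m"
      using assms(1) by (intro divide_left_mono) auto
    also have "\<dots> \<le> 1 / real (w i)"
      using assms(1) by (intro divide_left_mono) auto
    finally show ?thesis
      using False by (simp add: y QD_pt_b add_increasing2)
  qed
qed

lemma hausdorff_funpow_shift_word_sets_ge:
  assumes "i < n" "w i \<in> {1..m}" "v i \<in> {1..m}" "w i \<noteq> v i"
  shows "1 / (real m)\<^sup>2 \<le> hausdorff_metric QD ((shift ^^ i) ` word_set w n) ((shift ^^ i) ` word_set v n)"
proof (rule hausdorff_metric_ge[OF _ pt_b_in_funpow_shift_word_set[OF assms(1)]])
  show "(shift ^^ i) ` word_set v n \<noteq> {}"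
    using assms(1) by (auto simp: word_set_def)
qed (use assms QD_funpow_shift_word_set_ge in \<open>auto simp: word_set_def\<close>)

lemma words_differ_at:
  assumes "w \<in> {..<n} \<rightarrow>\<^sub>E {1..m}" "v \<in> {..<n} \<rightarrow>\<^sub>E {1..m}" "w \<noteq> v"
  obtains i where "i < n" "w i \<in> {1..m}" "v i \<in> {1..m}" "w i \<noteq> v i"
proof -
  obtain i where "i < n" "w i \<noteq> v i"
    using PiE_ext[OF assms(1,2)] assms(3) by blast
  moreover have "w i \<in> {1..m}" "v i \<in> {1..m}"
    using assms(1,2) \<open>i < n\<close> by (auto intro: PiE_mem)
  ultimately show thesis
    using that by blast
qed

lemma inj_on_word_set: "inj_on (\<lambda>w. word_set w n) ({..<n} \<rightarrow>\<^sub>E {1..m})"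
proof (rule inj_onI, rule ccontr)
  fix w v assume w: "w \<in> {..<n} \<rightarrow>\<^sub>E {1..m}" and v: "v \<in> {..<n} \<rightarrow>\<^sub>E {1..m}"
    and eq: "word_set w n = word_set v n" and "w \<noteq> v"
  then obtain i where i: "i < n" "w i \<in> {1..m}" "v i \<in> {1..m}" "w i \<noteq> v i"
    using words_differ_at[OF w v \<open>w \<noteq> v\<close>] by blast
  have "pt_b (w i) 0 \<in> (shift ^^ i) ` word_set v n"
    using pt_b_in_funpow_shift_word_set[OF \<open>i < n\<close>, of w] eq by simp
  then have "1 / (real m)\<^sup>2 \<le> QD (pt_b (w i) 0) (pt_b (w i) 0)"
    using QD_funpow_shift_word_set_ge[of w i m v, OF i(2-4)] by blast
  moreover have "QD (pt_b (w i) 0) (pt_b (w i) 0) = 0"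
    by (simp add: QD_pt_b)
  ultimately show False
    using i(2) by simp
qed

lemma word_sets_separated:
  assumes "0 < n"
  shows "separated_set (hyperspace QD S_Q) (hausdorff_metric QD) (\<lambda>A. shift ` A) n (1 / (2 * (real m)\<^sup>2))
           ((\<lambda>w. word_set w n) ` ({..<n} \<rightarrow>\<^sub>E {1..m}))"
  unfolding separated_set_def
proof (intro conjI ballI impI)
  show "(\<lambda>w. word_set w n) ` ({..<n} \<rightarrow>\<^sub>E {1..m}) \<subseteq> hyperspace QD S_Q"
    using word_set_in_hyperspace[OF assms] by blast
  fix A B assume "A \<in> (\<lambda>w. word_set w n) ` ({..<n} \<rightarrow>\<^sub>E {1..m})" "B \<in> (\<lambda>w. word_set w n) ` ({..<n} \<rightarrow>\<^sub>E {1..m})"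
    and "A \<noteq> B"
  then obtain w v where w: "w \<in> {..<n} \<rightarrow>\<^sub>E {1..m}" and v: "v \<in> {..<n} \<rightarrow>\<^sub>E {1..m}"
    and "w \<noteq> v" and A: "A = word_set w n" and B: "B = word_set v n"
    by blast
  then obtain i where i: "i < n" "w i \<in> {1..m}" "v i \<in> {1..m}" "w i \<noteq> v i"
    using words_differ_at[OF w v \<open>w \<noteq> v\<close>] by blast
  have "1 / (2 * (real m)\<^sup>2) < 1 / (real m)\<^sup>2"
    using i(2) by (simp add: divide_strict_left_mono)
  also have "\<dots> \<le> hausdorff_metric QD ((shift ^^ i) ` A) ((shift ^^ i) ` B)"
    unfolding A B using i by (rule hausdorff_funpow_shift_word_sets_ge)
  also have "\<dots> \<le> bowen_dist (hausdorff_metric QD) (\<lambda>A. shift ` A) n A B"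
    using \<open>i < n\<close> by (rule bowen_dist_hausdorff_ge)
  finally show "1 / (2 * (real m)\<^sup>2) < bowen_dist (hausdorff_metric QD) (\<lambda>A. shift ` A) n A B" .
qed

lemma top_entropy_hyperspace_S_Q:
  "top_entropy (hyperspace QD S_Q) (hausdorff_metric QD) (\<lambda>A. shift ` A) = \<infinity>"
proof (rule top_entropy_eq_infinity_if_exponential_growth)
  fix m :: nat assume "1 \<le> m"
  let ?E = "\<lambda>n. (\<lambda>w. word_set w (Suc n)) ` ({..<Suc n} \<rightarrow>\<^sub>E {1..m})"
  show "\<exists>\<epsilon>>0. \<forall>n. \<exists>E. finite E \<and>
      separated_set (hyperspace QD S_Q) (hausdorff_metric QD) (\<lambda>A. shift ` A) (Suc n) \<epsilon> E \<and>
      card E = m ^ Suc n"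
  proof (intro exI[of _ "1 / (2 * (real m)\<^sup>2)"] conjI allI)
    show "0 < 1 / (2 * (real m)\<^sup>2)"
      using \<open>1 \<le> m\<close> by simp
    fix n
    show "\<exists>E. finite E \<and>
      separated_set (hyperspace QD S_Q) (hausdorff_metric QD) (\<lambda>A. shift ` A) (Suc n)
        (1 / (2 * (real m)\<^sup>2)) E \<and> card E = m ^ Suc n"
    proof (intro exI[of _ "?E n"] conjI)
      show "finite (?E n)"
        by (intro finite_imageI finite_PiE) simp_all
      show "separated_set (hyperspace QD S_Q) (hausdorff_metric QD) (\<lambda>A. shift ` A) (Suc n)
          (1 / (2 * (real m)\<^sup>2)) (?E n)"
        by (rule word_sets_separated) simp
      show "card (?E n) = m ^ Suc n"
        using card_image[OF inj_on_word_set] by (simp add: card_PiE)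
    qed
  qed
qed

theorem proposition5p10:
  shows "top_entropy S_Q QD shift = 0 \<and>
         top_entropy (hyperspace QD S_Q) (hausdorff_metric QD) (\<lambda>A. shift ` A) = \<infinity>"
  using top_entropy_S_Q top_entropy_hyperspace_S_Q by simp

end
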